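(* If a randomized predictor $f\in\Delta(\mathcal{H})$ is $\epsilon$-smoothed-decision calibrated, i.e. $\max_{i\in[N]}\max_{j\in[d]}\max_{a\in A}|\mathbb{E}_{h\sim f}\mathbb{E}_{\mathcal{D}}[(y_j-h(x)_j)\tilde b_i(h(x),a)]|\le\epsilon$, then for quantal-responding receivers it has $\big(2L|A|\epsilon+\frac{\ln|A|+1}{\eta}\big)$-swap regret, type regret and swap-type regret; that is, with $\beta=2L|A|\epsilon+\frac{\ln|A|+1}{\eta}$, for all $i,i'\in[N]$ and all $\phi:A\to A$: $\mathbb{E}_{h\sim f}\mathbb{E}_{\mathcal{D}}[\sum_a v_i(\phi(a),y)\tilde b_i(h(x),a)]\le\mathbb{E}_{h\sim f}\mathbb{E}_{\mathcal{D}}[\sum_a v_i(a,y)\tilde b_i(h(x),a)]+\beta$, $\mathbb{E}_{h\sim f}\mathbb{E}_{\mathcal{D}}[\sum_a v_i(a,y)\tilde b_{i'}(h(x),a)]\le\mathbb{E}_{h\sim f}\mathbb{E}_{\mathcal{D}}[\sum_a v_i(a,y)\tilde b_i(h(x),a)]+\beta$, $\mathbb{E}_{h\sim f}\mathbb{E}_{\mathcal{D}}[\sum_a v_i(\phi(a),y)\tilde b_{i'}(h(x),a)]\le\mathbb{E}_{h\sim f}\mathbb{E}_{\mathcal{D}}[\sum_a v_i(a,y)\tilde b_i(h(x),a)]+\beta$.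
   Context: Data $(x,y)\in\mathcal{X}\times[-1,1]^d$ drawn from $\mathcal{D}$; $\mathcal{H}$ is a class of functions $h:\mathcal{X}\to[-1,1]^d$, $\Delta(\mathcal{H})$ the distributions over it. All $N$ receivers share a common finite action set $A$; receiver $i$ has utility $v_i:A\times[-1,1]^d\to[0,1]$, linear in $y$, with $|v_i(a,y_1)-v_i(a,y_2)|\le L\|y_1-y_2\|_\infty$. For $\eta>0$, the $\eta$-quantal response is $\tilde b_i(z,a)=e^{\eta v_i(a,z)}/\sum_{a'\in A}e^{\eta v_i(a',z)}$. *)

theory Defs
  imports "HOL-Analysis.Analysis"
begin

text \<open>The label space [-1,1]^d, with d the (finite) cardinality of the index type 'd.\<close>
definition cube :: "(real^'d) set" where
  "cube = {y. \<forall>j. \<bar>y $ j\<bar> \<le> 1}"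

definition quantal :: "real \<Rightarrow> 'a set \<Rightarrow> ('a \<Rightarrow> 'y \<Rightarrow> real) \<Rightarrow> 'y \<Rightarrow> 'a \<Rightarrow> real" where
  "quantal \<eta> A u z a = exp (\<eta> * u a z) / (\<Sum>a'\<in>A. exp (\<eta> * u a' z))"

definition EE :: "'h measure \<Rightarrow> ('x \<times> 'y) measure \<Rightarrow> ('h \<Rightarrow> 'x \<Rightarrow> 'y \<Rightarrow> real) \<Rightarrow> real" where
  "EE F D g = (\<integral>h. (\<integral>p. g h (fst p) (snd p) \<partial>D) \<partial>F)"

end

theory Submission
  imports Defs "HOL-Probability.Probability"
begin

(* Because utilities are affine, u(y) = c + w \<bullet> y, calibration transfers between labels and
   predictions: E[(u y - u z) q z] = (\<Sum>j. w$j E[(y$j - z$j) q z]), and the sup-norm Lipschitz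
   bound gives (\<Sum>j. |w$j|) \<le> L, so swapping y for z in an expected utility weighted by a
   quantal response costs at most |A| L \<epsilon>.  With the label replaced by the prediction, the
   quantal response is pointwise (ln |A|)/\<eta>-optimal against every deviation, by Gibbs'
   inequality (entropy \<le> ln |A|).  Transferring to z, deviating, and transferring back
   costs 2 L |A| \<epsilon> + (ln |A|)/\<eta> \<le> \<beta>. *)

lemma quantal_pos:
  assumes "finite A" "A \<noteq> {}"
  shows "0 < quantal \<eta> A u z a"
  unfolding quantal_def using assms by (intro divide_pos_pos sum_pos) auto

lemma quantal_le_1:
  assumes "finite A" "a \<in> A"
  shows "quantal \<eta> A u z a \<le> 1"
  unfolding quantal_def using assms
  by (subst divide_le_eq_1_pos) (auto intro!: sum_pos member_le_sum)

lemma sum_quantal: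
  assumes "finite A" "A \<noteq> {}"
  shows "(\<Sum>a\<in>A. quantal \<eta> A u z a) = 1"
proof -
  have "(\<Sum>a\<in>A. exp (\<eta> * u a z)) > 0" using assms by (intro sum_pos) auto
  then show ?thesis unfolding quantal_def by (simp add: sum_divide_distrib[symmetric])
qed

lemma abs_quantal_le_1:
  assumes "finite A" "a \<in> A"
  shows "\<bar>quantal \<eta> A u z a\<bar> \<le> 1"
proof -
  have "A \<noteq> {}"
    using assms by auto
  then have "0 < quantal \<eta> A u z a"
    by (rule quantal_pos[OF assms(1)])
  then show ?thesis
    using quantal_le_1[OF assms] by simp
qed

lemma entropy_le_ln_card:
  fixes p :: "'a \<Rightarrow> real"
  assumes A: "finite A" and p_pos: "\<And>a. a \<in> A \<Longrightarrow> 0 < p a" and p_sum: "sum p A = 1"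
  shows "- (\<Sum>a\<in>A. p a * ln (p a)) \<le> ln (card A)"
proof -
  define n where "n = real (card A)"
  have "A \<noteq> {}" using p_sum by auto
  then have n_pos: "0 < n" using A by (simp add: n_def card_gt_0_iff)
  have "p a * ln (1 / (n * p a)) \<le> 1 / n - p a" if "a \<in> A" for a
  proof -
    have "p a * ln (1 / (n * p a)) \<le> p a * (1 / (n * p a) - 1)"
      using p_pos[OF that] n_pos by (intro mult_left_mono ln_le_minus_one) auto
    also have "\<dots> = 1 / n - p a"
      using p_pos[OF that] n_pos by (simp add: field_simps)
    finally show ?thesis .
  qed
  then have "(\<Sum>a\<in>A. p a * ln (1 / (n * p a))) \<le> (\<Sum>a\<in>A. 1 / n - p a)"
    by (rule sum_mono)
  also have "\<dots> = 0"
    using p_sum n_pos by (simp add: sum_subtractf n_def)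
  also have "(\<Sum>a\<in>A. p a * ln (1 / (n * p a))) = - ln n - (\<Sum>a\<in>A. p a * ln (p a))"
  proof -
    have "(\<Sum>a\<in>A. p a * ln (1 / (n * p a))) = (\<Sum>a\<in>A. - (p a * ln n) - p a * ln (p a))"
      using p_pos n_pos by (intro sum.cong) (auto simp: ln_div ln_mult algebra_simps)
    also have "\<dots> = - ln n - (\<Sum>a\<in>A. p a * ln (p a))"
      by (simp add: sum_subtractf sum_negf flip: sum_distrib_right) (simp add: p_sum)
    finally show ?thesis .
  qed
  finally show ?thesis by (simp add: n_def)
qed

lemma le_expected_utility_quantal:
  assumes A: "finite A" and \<eta>: "\<eta> > 0" and a0: "a0 \<in> A"
  shows "u a0 z \<le> (\<Sum>a\<in>A. u a z * quantal \<eta> A u z a) + ln (card A) / \<eta>"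
proof -
  define S where "S = (\<Sum>a\<in>A. exp (\<eta> * u a z))"
  define p where "p = quantal \<eta> A u z"
  have exp_le: "exp (\<eta> * u a0 z) \<le> S"
    unfolding S_def using A a0 by (intro member_le_sum) auto
  then have S_pos: "0 < S"
    by (rule less_le_trans[OF exp_gt_zero])
  have "\<eta> * u a0 z \<le> ln S"
    using exp_le S_pos by (simp add: ln_ge_iff)
  have ln_p: "ln (p a) = \<eta> * u a z - ln S" for a
    using S_pos by (simp add: p_def quantal_def S_def ln_div)
  have p_sum: "sum p A = 1"
    unfolding p_def using A a0 by (intro sum_quantal) auto
  have "(\<Sum>a\<in>A. p a * ln (p a)) = \<eta> * (\<Sum>a\<in>A. u a z * p a) - ln S * sum p A"
    by (simp add: ln_p algebra_simps sum_subtractf sum_distrib_left sum_distrib_right)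
  then have "ln S - \<eta> * (\<Sum>a\<in>A. u a z * p a) = - (\<Sum>a\<in>A. p a * ln (p a))"
    by (simp add: p_sum)
  also have "\<dots> \<le> ln (card A)"
    using A a0 p_sum by (intro entropy_le_ln_card) (auto simp: p_def intro: quantal_pos)
  finally have "\<eta> * u a0 z \<le> \<eta> * (\<Sum>a\<in>A. u a z * p a) + ln (card A)"
    using \<open>\<eta> * u a0 z \<le> ln S\<close> by linarith
  then show ?thesis
    using \<eta> by (simp add: p_def field_simps)
qed

lemma quantal_deviation_le:
  assumes A: "finite A" "A \<noteq> {}" and \<eta>: "\<eta> > 0" and \<psi>: "\<psi> ` A \<subseteq> A"
  shows "(\<Sum>a\<in>A. u (\<psi> a) z * quantal \<eta> A u' z a)
           \<le> (\<Sum>a\<in>A. u a z * quantal \<eta> A u z a) + ln (card A) / \<eta>"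
    (is "_ \<le> ?R")
proof -
  have "(\<Sum>a\<in>A. u (\<psi> a) z * quantal \<eta> A u' z a) \<le> (\<Sum>a\<in>A. ?R * quantal \<eta> A u' z a)"
    using \<psi> by (intro sum_mono mult_right_mono le_expected_utility_quantal A \<eta>)
      (auto intro: less_imp_le quantal_pos A)
  also have "\<dots> = ?R"
    by (simp add: sum_quantal[OF A] flip: sum_distrib_left)
  finally show ?thesis .
qed

lemma sum_abs_coeffs_le_Lipschitz:
  fixes w :: "real^'d"
  assumes affine: "\<And>y. f y = c + w \<bullet> y"
    and lip: "\<forall>y1\<in>cube. \<forall>y2\<in>cube. \<bar>f y1 - f y2\<bar> \<le> L * infnorm (y1 - y2)"
  shows "(\<Sum>j\<in>UNIV. \<bar>w $ j\<bar>) \<le> L"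
proof -
  define s :: "real^'d" where "s = (\<chi> j. if 0 \<le> w $ j then 1 else - 1)"
  have s_abs: "\<bar>s $ j\<bar> = 1" for j
    by (simp add: s_def)
  then have "s \<in> cube" "- s \<in> cube"
    by (auto simp: cube_def)
  then have "\<bar>f s - f (- s)\<bar> \<le> L * infnorm (s - - s)"
    using lip by blast
  moreover have "infnorm (s - - s) = 2"
  proof -
    have "infnorm s = 1"
      unfolding infnorm_cart s_abs by simp
    then show ?thesis
      using infnorm_mul[of 2 s] by (simp add: scaleR_2)
  qed
  moreover have "f s - f (- s) = 2 * (w \<bullet> s)"
    by (simp add: affine inner_minus_right)
  moreover have "w \<bullet> s = (\<Sum>j\<in>UNIV. \<bar>w $ j\<bar>)"
    unfolding inner_vec_def by (intro sum.cong) (auto simp: s_def)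
  ultimately show ?thesis
    by simp
qed

lemma integral_affine_diff_le:
  fixes Y Z :: "'m \<Rightarrow> real^'d"
  assumes affine: "\<And>y. f y = c + w \<bullet> y" and L: "(\<Sum>j\<in>UNIV. \<bar>w $ j\<bar>) \<le> L"
    and int: "\<And>j. integrable M (\<lambda>\<omega>. (Y \<omega> $ j - Z \<omega> $ j) * p \<omega>)"
    and err: "\<And>j. \<bar>\<integral>\<omega>. (Y \<omega> $ j - Z \<omega> $ j) * p \<omega> \<partial>M\<bar> \<le> \<epsilon>"
  shows "\<bar>\<integral>\<omega>. (f (Y \<omega>) - f (Z \<omega>)) * p \<omega> \<partial>M\<bar> \<le> L * \<epsilon>"
proof -
  have \<epsilon>: "0 \<le> \<epsilon>"
    using err by (meson abs_ge_zero order_trans)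
  have "(f (Y \<omega>) - f (Z \<omega>)) * p \<omega>
      = (\<Sum>j\<in>UNIV. w $ j * ((Y \<omega> $ j - Z \<omega> $ j) * p \<omega>))" for \<omega>
  proof -
    have "(f (Y \<omega>) - f (Z \<omega>)) * p \<omega> = (w \<bullet> (Y \<omega> - Z \<omega>)) * p \<omega>"
      by (simp add: affine inner_diff_right)
    then show ?thesis
      by (simp add: inner_vec_def sum_distrib_right mult.assoc)
  qed
  then have "\<bar>\<integral>\<omega>. (f (Y \<omega>) - f (Z \<omega>)) * p \<omega> \<partial>M\<bar>
      = \<bar>\<Sum>j\<in>UNIV. w $ j * (\<integral>\<omega>. (Y \<omega> $ j - Z \<omega> $ j) * p \<omega> \<partial>M)\<bar>"
    using int by simp
  also have "\<dots> \<le> (\<Sum>j\<in>UNIV. \<bar>w $ j\<bar> * \<epsilon>)"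
    by (intro order_trans[OF sum_abs] sum_mono) (simp add: abs_mult mult_left_mono err)
  also have "\<dots> \<le> L * \<epsilon>"
    using mult_right_mono[OF L \<epsilon>] by (simp add: sum_distrib_right)
  finally show ?thesis .
qed

lemma borel_measurable_affine:
  fixes w :: "'v::euclidean_space"
  assumes "\<And>y. f y = c + w \<bullet> y"
  shows "f \<in> borel_measurable borel"
proof -
  have "f = (\<lambda>y. c + w \<bullet> y)"
    using assms by auto
  then show ?thesis
    by simp
qed

lemma borel_measurable_vec_nth [measurable (raw)]:
  fixes f :: "'m \<Rightarrow> real^'d"
  assumes "f \<in> borel_measurable M"
  shows "(\<lambda>x. f x $ j) \<in> borel_measurable M"
proof -
  have "(\<lambda>y::real^'d. y $ j) \<in> borel_measurable borel"
    by (intro borel_measurable_continuous_onI continuous_intros)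
  then show ?thesis
    using assms by (rule measurable_compose[rotated])
qed

definition admissible_utility :: "'a set \<Rightarrow> real \<Rightarrow> ('a \<Rightarrow> real^'d \<Rightarrow> real) \<Rightarrow> bool" where
  "admissible_utility A L u \<longleftrightarrow> (\<forall>a\<in>A.
     (\<forall>y\<in>cube. 0 \<le> u a y \<and> u a y \<le> 1) \<and> (\<exists>c w. \<forall>y. u a y = c + w \<bullet> y) \<and>
     (\<forall>y1\<in>cube. \<forall>y2\<in>cube. \<bar>u a y1 - u a y2\<bar> \<le> L * infnorm (y1 - y2)))"

(* One receiver's share of the paper's \<epsilon>-smoothed-decision calibration. *)
definition smoothly_calibrated ::
    "('x \<Rightarrow> real^'d) measure \<Rightarrow> ('x \<times> (real^'d)) measure \<Rightarrow> real \<Rightarrow> 'a set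
       \<Rightarrow> ('a \<Rightarrow> real^'d \<Rightarrow> real) \<Rightarrow> real \<Rightarrow> bool" where
  "smoothly_calibrated F D \<eta> A u \<epsilon> \<longleftrightarrow>
     (\<forall>j. \<forall>a\<in>A. \<bar>EE F D (\<lambda>h x y. (y $ j - h x $ j) * quantal \<eta> A u (h x) a)\<bar> \<le> \<epsilon>)"

lemma admissible_utility_measurable:
  assumes "admissible_utility A L u" "a \<in> A"
  shows "u a \<in> borel_measurable borel"
  using assms unfolding admissible_utility_def by (metis borel_measurable_affine)

lemma borel_measurable_quantal:
  assumes "finite A" "\<And>b. b \<in> A \<Longrightarrow> u b \<in> borel_measurable borel" "a \<in> A"
  shows "(\<lambda>z. quantal \<eta> A u z a) \<in> borel_measurable borel"
  unfolding quantal_def using assms by measurable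

locale prediction_label_space = pair_prob_space F D
  for F :: "('x \<Rightarrow> real^'d) measure" and D :: "('x \<times> (real^'d)) measure" +
  assumes labels_in_cube: "\<forall>p\<in>space D. snd p \<in> cube"
    and predictions_in_cube: "\<forall>h\<in>space F. \<forall>x. h x \<in> cube"
    and measurable_prediction_label:
      "(\<lambda>(h, p). (h (fst p), snd p)) \<in> borel_measurable (F \<Otimes>\<^sub>M D)"
begin

definition prediction :: "('x \<Rightarrow> real^'d) \<times> 'x \<times> (real^'d) \<Rightarrow> real^'d" where
  "prediction \<omega> = fst \<omega> (fst (snd \<omega>))"

definition label :: "('x \<Rightarrow> real^'d) \<times> 'x \<times> (real^'d) \<Rightarrow> real^'d" where
  "label \<omega> = snd (snd \<omega>)"

lemma measurable_prediction [measurable]: "prediction \<in> borel_measurable (F \<Otimes>\<^sub>M D)"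
proof -
  have "prediction = fst \<circ> (\<lambda>(h, p). (h (fst p), snd p))"
    by (auto simp: prediction_def)
  also have "\<dots> \<in> borel_measurable (F \<Otimes>\<^sub>M D)"
    by (rule measurable_comp[OF measurable_prediction_label]) (simp add: borel_prod[symmetric])
  finally show ?thesis .
qed

lemma measurable_label [measurable]: "label \<in> borel_measurable (F \<Otimes>\<^sub>M D)"
proof -
  have "label = snd \<circ> (\<lambda>(h, p). (h (fst p), snd p))"
    by (auto simp: label_def)
  also have "\<dots> \<in> borel_measurable (F \<Otimes>\<^sub>M D)"
    by (rule measurable_comp[OF measurable_prediction_label]) (simp add: borel_prod[symmetric])
  finally show ?thesis .
qed

lemma prediction_in_cube: "\<omega> \<in> space (F \<Otimes>\<^sub>M D) \<Longrightarrow> prediction \<omega> \<in> cube"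
  and label_in_cube: "\<omega> \<in> space (F \<Otimes>\<^sub>M D) \<Longrightarrow> label \<omega> \<in> cube"
  using predictions_in_cube labels_in_cube
  by (auto simp: prediction_def label_def space_pair_measure)

lemma EE_eq_integral:
  assumes "integrable (F \<Otimes>\<^sub>M D) (\<lambda>\<omega>. G (prediction \<omega>) (label \<omega>))"
  shows "EE F D (\<lambda>h x y. G (h x) y) = (\<integral>\<omega>. G (prediction \<omega>) (label \<omega>) \<partial>(F \<Otimes>\<^sub>M D))"
  using integral_fst'[OF assms] by (simp add: EE_def prediction_def label_def)

lemma integrable_utility_quantal:
  assumes A: "finite A" "b \<in> A" "a \<in> A"
    and u: "admissible_utility A L u" and u': "\<And>a. a \<in> A \<Longrightarrow> u' a \<in> borel_measurable borel"
    and X: "X \<in> borel_measurable (F \<Otimes>\<^sub>M D)" "\<And>\<omega>. \<omega> \<in> space (F \<Otimes>\<^sub>M D) \<Longrightarrow> X \<omega> \<in> cube"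
  shows "integrable (F \<Otimes>\<^sub>M D) (\<lambda>\<omega>. u b (X \<omega>) * quantal \<eta> A u' (prediction \<omega>) a)"
proof (rule P.integrable_const_bound[where B = 1])
  have [measurable]: "u b \<in> borel_measurable borel" "(\<lambda>z. quantal \<eta> A u' z a) \<in> borel_measurable borel"
    using A u u' by (auto intro: admissible_utility_measurable borel_measurable_quantal)
  show "(\<lambda>\<omega>. u b (X \<omega>) * quantal \<eta> A u' (prediction \<omega>) a) \<in> borel_measurable (F \<Otimes>\<^sub>M D)"
    using X by measurable
  have "0 \<le> u b y" "u b y \<le> 1" if "y \<in> cube" for y
    using u A that by (auto simp: admissible_utility_def)
  moreover have "\<bar>quantal \<eta> A u' z a\<bar> \<le> 1" for z
    by (rule abs_quantal_le_1[OF A(1,3)])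
  ultimately show "AE \<omega> in F \<Otimes>\<^sub>M D. norm (u b (X \<omega>) * quantal \<eta> A u' (prediction \<omega>) a) \<le> 1"
    using X by (intro AE_I2) (auto simp: abs_mult intro!: mult_le_one)
qed

lemma integrable_calibration_error:
  assumes A: "finite A" "a \<in> A" and u: "\<And>a. a \<in> A \<Longrightarrow> u a \<in> borel_measurable borel"
  shows "integrable (F \<Otimes>\<^sub>M D)
           (\<lambda>\<omega>. (label \<omega> $ j - prediction \<omega> $ j) * quantal \<eta> A u (prediction \<omega>) a)"
proof (rule P.integrable_const_bound[where B = 2])
  have [measurable]: "(\<lambda>z. quantal \<eta> A u z a) \<in> borel_measurable borel"
    by (rule borel_measurable_quantal[OF A(1) u A(2)])
  show "(\<lambda>\<omega>. (label \<omega> $ j - prediction \<omega> $ j) * quantal \<eta> A u (prediction \<omega>) a)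
      \<in> borel_measurable (F \<Otimes>\<^sub>M D)"
    by measurable
  have "\<bar>(label \<omega> $ j - prediction \<omega> $ j) * quantal \<eta> A u (prediction \<omega>) a\<bar> \<le> 2 * 1"
    if "\<omega> \<in> space (F \<Otimes>\<^sub>M D)" for \<omega>
  proof -
    have "\<bar>label \<omega> $ j\<bar> \<le> 1" "\<bar>prediction \<omega> $ j\<bar> \<le> 1"
      using label_in_cube[OF that] prediction_in_cube[OF that] by (auto simp: cube_def)
    then have "\<bar>label \<omega> $ j - prediction \<omega> $ j\<bar> \<le> 2"
      using abs_triangle_ineq4[of "label \<omega> $ j" "prediction \<omega> $ j"] by linarith
    then show ?thesis
      unfolding abs_mult using abs_quantal_le_1[OF A] by (intro mult_mono) auto
  qed
  then show "AE \<omega> in F \<Otimes>\<^sub>M D.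
      norm ((label \<omega> $ j - prediction \<omega> $ j) * quantal \<eta> A u (prediction \<omega>) a) \<le> 2"
    by (intro AE_I2) simp
qed

lemma calibration_transfer:
  assumes A: "finite A" and u: "admissible_utility A L u"
    and u': "\<And>a. a \<in> A \<Longrightarrow> u' a \<in> borel_measurable borel"
    and calibrated: "smoothly_calibrated F D \<eta> A u' \<epsilon>" and \<psi>: "\<psi> ` A \<subseteq> A"
  shows "\<bar>(\<integral>\<omega>. (\<Sum>a\<in>A. u (\<psi> a) (label \<omega>) * quantal \<eta> A u' (prediction \<omega>) a) \<partial>(F \<Otimes>\<^sub>M D))
          - (\<integral>\<omega>. (\<Sum>a\<in>A. u (\<psi> a) (prediction \<omega>) * quantal \<eta> A u' (prediction \<omega>) a) \<partial>(F \<Otimes>\<^sub>M D))\<bar>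
         \<le> real (card A) * (L * \<epsilon>)"
proof -
  define q where "q a \<omega> = quantal \<eta> A u' (prediction \<omega>) a" for a \<omega>
  have int: "integrable (F \<Otimes>\<^sub>M D) (\<lambda>\<omega>. u (\<psi> a) (label \<omega>) * q a \<omega>)"
    "integrable (F \<Otimes>\<^sub>M D) (\<lambda>\<omega>. u (\<psi> a) (prediction \<omega>) * q a \<omega>)" if "a \<in> A" for a
    unfolding q_def using A \<psi> that u u'
    by (auto intro!: integrable_utility_quantal label_in_cube prediction_in_cube)
  have transfer: "\<bar>\<integral>\<omega>. (u (\<psi> a) (label \<omega>) - u (\<psi> a) (prediction \<omega>)) * q a \<omega> \<partial>(F \<Otimes>\<^sub>M D)\<bar> \<le> L * \<epsilon>"
    if a: "a \<in> A" for a
  proof -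
    obtain c w where affine: "\<And>y. u (\<psi> a) y = c + w \<bullet> y"
      using u a \<psi> unfolding admissible_utility_def by blast
    show ?thesis
    proof (rule integral_affine_diff_le[OF affine])
      show "(\<Sum>j\<in>UNIV. \<bar>w $ j\<bar>) \<le> L"
        using u a \<psi> affine unfolding admissible_utility_def
        by (intro sum_abs_coeffs_le_Lipschitz[OF affine]) blast
      show int_error: "integrable (F \<Otimes>\<^sub>M D) (\<lambda>\<omega>. (label \<omega> $ j - prediction \<omega> $ j) * q a \<omega>)" for j
        unfolding q_def using A a u' by (rule integrable_calibration_error)
      show "\<bar>\<integral>\<omega>. (label \<omega> $ j - prediction \<omega> $ j) * q a \<omega> \<partial>(F \<Otimes>\<^sub>M D)\<bar> \<le> \<epsilon>" for j
      proof -
        have "\<bar>EE F D (\<lambda>h x y. (y $ j - h x $ j) * quantal \<eta> A u' (h x) a)\<bar> \<le> \<epsilon>"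
          using calibrated a unfolding smoothly_calibrated_def by blast
        then show ?thesis
          using EE_eq_integral[where G = "\<lambda>z y. (y $ j - z $ j) * quantal \<eta> A u' z a"] int_error[of j]
          unfolding q_def by simp
      qed
    qed
  qed
  have "\<bar>(\<integral>\<omega>. (\<Sum>a\<in>A. u (\<psi> a) (label \<omega>) * q a \<omega>) \<partial>(F \<Otimes>\<^sub>M D))
          - (\<integral>\<omega>. (\<Sum>a\<in>A. u (\<psi> a) (prediction \<omega>) * q a \<omega>) \<partial>(F \<Otimes>\<^sub>M D))\<bar>
        = \<bar>\<Sum>a\<in>A. \<integral>\<omega>. (u (\<psi> a) (label \<omega>) - u (\<psi> a) (prediction \<omega>)) * q a \<omega> \<partial>(F \<Otimes>\<^sub>M D)\<bar>"
    using int by (simp add: integral_sum integral_diff left_diff_distrib sum_subtractf)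
  also have "\<dots> \<le> (\<Sum>a\<in>A. \<bar>\<integral>\<omega>. (u (\<psi> a) (label \<omega>) - u (\<psi> a) (prediction \<omega>)) * q a \<omega> \<partial>(F \<Otimes>\<^sub>M D)\<bar>)"
    by (rule sum_abs)
  also have "\<dots> \<le> (\<Sum>a\<in>A. L * \<epsilon>)"
    by (intro sum_mono transfer)
  finally show ?thesis
    by (simp add: q_def)
qed

lemma quantal_deviation_regret:
  assumes A: "finite A" "A \<noteq> {}" and \<eta>: "\<eta> > 0" and \<psi>: "\<psi> ` A \<subseteq> A"
    and u: "admissible_utility A L u" and u': "\<And>a. a \<in> A \<Longrightarrow> u' a \<in> borel_measurable borel"
    and calibrated: "smoothly_calibrated F D \<eta> A u \<epsilon>"
    and calibrated': "smoothly_calibrated F D \<eta> A u' \<epsilon>"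
  shows "EE F D (\<lambda>h x y. \<Sum>a\<in>A. u (\<psi> a) y * quantal \<eta> A u' (h x) a)
           \<le> EE F D (\<lambda>h x y. \<Sum>a\<in>A. u a y * quantal \<eta> A u (h x) a)
              + 2 * L * real (card A) * \<epsilon> + ln (card A) / \<eta>"
proof -
  define deviate where "deviate z y = (\<Sum>a\<in>A. u (\<psi> a) y * quantal \<eta> A u' z a)" for z y
  define follow where "follow z y = (\<Sum>a\<in>A. u a y * quantal \<eta> A u z a)" for z y
  have meas: "\<And>a. a \<in> A \<Longrightarrow> u a \<in> borel_measurable borel"
    using u by (rule admissible_utility_measurable)
  have int: "integrable (F \<Otimes>\<^sub>M D) (\<lambda>\<omega>. deviate (prediction \<omega>) (X \<omega>))"
    "integrable (F \<Otimes>\<^sub>M D) (\<lambda>\<omega>. follow (prediction \<omega>) (X \<omega>))"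
    if X: "X \<in> borel_measurable (F \<Otimes>\<^sub>M D)" "\<And>\<omega>. \<omega> \<in> space (F \<Otimes>\<^sub>M D) \<Longrightarrow> X \<omega> \<in> cube" for X
  proof -
    show "integrable (F \<Otimes>\<^sub>M D) (\<lambda>\<omega>. deviate (prediction \<omega>) (X \<omega>))"
      unfolding deviate_def
      by (intro Bochner_Integration.integrable_sum integrable_utility_quantal[OF A(1) _ _ u u' X])
        (use \<psi> in auto)
    show "integrable (F \<Otimes>\<^sub>M D) (\<lambda>\<omega>. follow (prediction \<omega>) (X \<omega>))"
      unfolding follow_def
      by (intro Bochner_Integration.integrable_sum integrable_utility_quantal[OF A(1) _ _ u meas X])
  qed
  have int_label: "integrable (F \<Otimes>\<^sub>M D) (\<lambda>\<omega>. deviate (prediction \<omega>) (label \<omega>))"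
    "integrable (F \<Otimes>\<^sub>M D) (\<lambda>\<omega>. follow (prediction \<omega>) (label \<omega>))"
    using int[OF measurable_label] label_in_cube by blast+
  have int_prediction: "integrable (F \<Otimes>\<^sub>M D) (\<lambda>\<omega>. deviate (prediction \<omega>) (prediction \<omega>))"
    "integrable (F \<Otimes>\<^sub>M D) (\<lambda>\<omega>. follow (prediction \<omega>) (prediction \<omega>))"
    using int[OF measurable_prediction] prediction_in_cube by blast+
  have "EE F D (\<lambda>h x y. deviate (h x) y) = (\<integral>\<omega>. deviate (prediction \<omega>) (label \<omega>) \<partial>(F \<Otimes>\<^sub>M D))"
    using int_label(1) by (rule EE_eq_integral)
  also have "\<dots> \<le> (\<integral>\<omega>. deviate (prediction \<omega>) (prediction \<omega>) \<partial>(F \<Otimes>\<^sub>M D)) + card A * (L * \<epsilon>)"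
    using calibration_transfer[OF A(1) u u' calibrated' \<psi>] by (simp add: deviate_def abs_le_iff)
  also have "(\<integral>\<omega>. deviate (prediction \<omega>) (prediction \<omega>) \<partial>(F \<Otimes>\<^sub>M D))
      \<le> (\<integral>\<omega>. follow (prediction \<omega>) (prediction \<omega>) + ln (card A) / \<eta> \<partial>(F \<Otimes>\<^sub>M D))"
    using int_prediction unfolding deviate_def follow_def
    by (intro integral_mono quantal_deviation_le A \<eta> \<psi>) auto
  also have "\<dots> = (\<integral>\<omega>. follow (prediction \<omega>) (prediction \<omega>) \<partial>(F \<Otimes>\<^sub>M D)) + ln (card A) / \<eta>"
    using int_prediction by (simp add: P.prob_space)
  also have "(\<integral>\<omega>. follow (prediction \<omega>) (prediction \<omega>) \<partial>(F \<Otimes>\<^sub>M D))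
      \<le> (\<integral>\<omega>. follow (prediction \<omega>) (label \<omega>) \<partial>(F \<Otimes>\<^sub>M D)) + card A * (L * \<epsilon>)"
    using calibration_transfer[OF A(1) u meas calibrated, of "\<lambda>a. a"] by (simp add: follow_def abs_le_iff)
  also have "(\<integral>\<omega>. follow (prediction \<omega>) (label \<omega>) \<partial>(F \<Otimes>\<^sub>M D)) = EE F D (\<lambda>h x y. follow (h x) y)"
    using int_label(2) by (rule EE_eq_integral[symmetric])
  finally show ?thesis
    by (simp add: deviate_def follow_def algebra_simps)
qed

end

theorem theorem8:
  fixes D :: "('x \<times> (real^'d)) measure"
    and H :: "('x \<Rightarrow> real^'d) set"
    and F :: "('x \<Rightarrow> real^'d) measure"
    and A :: "'a set"
    and N :: nat
    and v :: "nat \<Rightarrow> 'a \<Rightarrow> real^'d \<Rightarrow> real"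
    and L \<eta> \<epsilon> :: real
  assumes D_prob: "emeasure D (space D) = 1"
    and D_range: "\<forall>p\<in>space D. snd p \<in> cube"
    and H_range: "\<forall>h\<in>H. \<forall>x. h x \<in> cube"
    and F_prob: "emeasure F (space F) = 1"
    and F_support: "space F \<subseteq> H"
    and meas: "(\<lambda>(h, p). (h (fst p), snd p)) \<in> borel_measurable (F \<Otimes>\<^sub>M D)"
    and A_fin: "finite A" and A_ne: "A \<noteq> {}"
    and v_range: "\<forall>i<N. \<forall>a\<in>A. \<forall>y\<in>cube. 0 \<le> v i a y \<and> v i a y \<le> 1"
    and v_linear: "\<forall>i<N. \<forall>a\<in>A. \<exists>c w. \<forall>y. v i a y = c + w \<bullet> y"
    and v_lip: "\<forall>i<N. \<forall>a\<in>A. \<forall>y1\<in>cube. \<forall>y2\<in>cube.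
                  \<bar>v i a y1 - v i a y2\<bar> \<le> L * infnorm (y1 - y2)"
    and eta_pos: "\<eta> > 0"
    and calibrated: "\<forall>i<N. \<forall>j. \<forall>a\<in>A.
           \<bar>EE F D (\<lambda>h x y. (y $ j - h x $ j) * quantal \<eta> A (v i) (h x) a)\<bar> \<le> \<epsilon>"
  defines "\<beta> \<equiv> 2 * L * real (card A) * \<epsilon> + (ln (real (card A)) + 1) / \<eta>"
  shows "\<forall>i<N. \<forall>i'<N. \<forall>\<phi>. \<phi> ` A \<subseteq> A \<longrightarrow>
     EE F D (\<lambda>h x y. \<Sum>a\<in>A. v i (\<phi> a) y * quantal \<eta> A (v i) (h x) a)
       \<le> EE F D (\<lambda>h x y. \<Sum>a\<in>A. v i a y * quantal \<eta> A (v i) (h x) a) + \<beta>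
   \<and> EE F D (\<lambda>h x y. \<Sum>a\<in>A. v i a y * quantal \<eta> A (v i') (h x) a)
       \<le> EE F D (\<lambda>h x y. \<Sum>a\<in>A. v i a y * quantal \<eta> A (v i) (h x) a) + \<beta>
   \<and> EE F D (\<lambda>h x y. \<Sum>a\<in>A. v i (\<phi> a) y * quantal \<eta> A (v i') (h x) a)
       \<le> EE F D (\<lambda>h x y. \<Sum>a\<in>A. v i a y * quantal \<eta> A (v i) (h x) a) + \<beta>"
proof -
  interpret F: prob_space F
    by (rule prob_spaceI) (rule F_prob)
  interpret D: prob_space D
    by (rule prob_spaceI) (rule D_prob)
  have "pair_prob_space F D"
    by (simp add: pair_prob_space_def pair_sigma_finite_def prob_space_imp_sigma_finite
        F.prob_space_axioms D.prob_space_axioms)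
  then interpret prediction_label_space F D
    by (rule prediction_label_space.intro, unfold_locales) (use D_range H_range F_support meas in auto)
  have receiver_admissible: "admissible_utility A L (v i)" if "i < N" for i
    unfolding admissible_utility_def using v_range v_linear v_lip that by blast
  have receiver_calibrated: "smoothly_calibrated F D \<eta> A (v i) \<epsilon>" if "i < N" for i
    unfolding smoothly_calibrated_def using calibrated that by blast
  have "ln (card A) / \<eta> \<le> (ln (card A) + 1) / \<eta>"
    using eta_pos by (simp add: divide_right_mono)
  then have regret: "EE F D (\<lambda>h x y. \<Sum>a\<in>A. v i (\<psi> a) y * quantal \<eta> A (v i') (h x) a)
      \<le> EE F D (\<lambda>h x y. \<Sum>a\<in>A. v i a y * quantal \<eta> A (v i) (h x) a) + \<beta>"
    if "i < N" "i' < N" "\<psi> ` A \<subseteq> A" for i i' \<psi>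
    using quantal_deviation_regret[OF A_fin A_ne eta_pos that(3) receiver_admissible
        admissible_utility_measurable[OF receiver_admissible] receiver_calibrated receiver_calibrated]
      that unfolding \<beta>_def by fastforce
  show ?thesis
    by (auto intro!: regret)
qed

end
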